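(* If $(f_m)$ is a Riesz sequence in $\mathcal{L}^2(I)$, then $(f_m*_T0)$ is also a Riesz sequence in $\mathcal{L}^2(I)$.
   Context: Let $N\ge 2$, $I=[x_0,x_N]$, $\Delta: x_0<\dots<x_N$ a partition, $L_n(x)=a_nx+b_n$ affine with $L_n(x_0)=x_{n-1}$, $L_n(x_N)=x_n$, $I_1=[x_0,x_1]$, $I_n=(x_{n-1},x_n]$ for $n\ge2$, and $\alpha=(\alpha_1,\dots,\alpha_N)\in(\mathcal{L}^\infty(I))^N$ with $\Lambda:=\operatorname{ess\,sup}\{|\alpha_n(x)|:x\in I,n=1,\dots,N\}<1$. For $f,b\in\mathcal{L}^2(I)$, $f*_Tb$ is the unique fixed point in $\mathcal{L}^2(I)$ of the contraction $Tg(x):=f(x)+\alpha_n(L_n^{-1}(x))(g-b)(L_n^{-1}(x))$, $x\in I_n$; $0$ is the null function. *)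

theory Defs
  imports "HOL-Analysis.Analysis"
begin

definition Ival :: "(nat \<Rightarrow> real) \<Rightarrow> nat \<Rightarrow> real set" where
  "Ival x N = {x 0 .. x N}"

definition Isub :: "(nat \<Rightarrow> real) \<Rightarrow> nat \<Rightarrow> real set" where
  "Isub x n = (if n = 1 then {x 0 .. x 1} else {x (n - 1) <.. x n})"

text \<open>The affine map L_n(t) = a_n t + b_n with L_n(x_0) = x_{n-1}, L_n(x_N) = x_n.\<close>
definition Lmap :: "(nat \<Rightarrow> real) \<Rightarrow> nat \<Rightarrow> nat \<Rightarrow> real \<Rightarrow> real" where
  "Lmap x N n t = x (n - 1) + (x n - x (n - 1)) / (x N - x 0) * (t - x 0)"

definition Linv :: "(nat \<Rightarrow> real) \<Rightarrow> nat \<Rightarrow> nat \<Rightarrow> real \<Rightarrow> real" where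
  "Linv x N n t = x 0 + (x N - x 0) / (x n - x (n - 1)) * (t - x (n - 1))"

definition L2 :: "real set \<Rightarrow> (real \<Rightarrow> real) \<Rightarrow> bool" where
  "L2 I g \<longleftrightarrow> g \<in> borel_measurable (lebesgue_on I) \<and>
                integrable (lebesgue_on I) (\<lambda>t. (g t)\<^sup>2)"

definition L2norm_sq :: "real set \<Rightarrow> (real \<Rightarrow> real) \<Rightarrow> real" where
  "L2norm_sq I g = (LINT t | lebesgue_on I. (g t)\<^sup>2)"

definition Top :: "(nat \<Rightarrow> real) \<Rightarrow> nat \<Rightarrow> (nat \<Rightarrow> real \<Rightarrow> real) \<Rightarrow>
    (real \<Rightarrow> real) \<Rightarrow> (real \<Rightarrow> real) \<Rightarrow> (real \<Rightarrow> real) \<Rightarrow> real \<Rightarrow> real" where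
  "Top x N \<alpha> f b g t = f t + (\<Sum>n=1..N. indicator (Isub x n) t *
      (\<alpha> n (Linv x N n t) * (g (Linv x N n t) - b (Linv x N n t))))"

text \<open>f *_T b : the (a.e.-unique) fixed point of T in L^2(I).\<close>
definition fractal :: "(nat \<Rightarrow> real) \<Rightarrow> nat \<Rightarrow> (nat \<Rightarrow> real \<Rightarrow> real) \<Rightarrow>
    (real \<Rightarrow> real) \<Rightarrow> (real \<Rightarrow> real) \<Rightarrow> real \<Rightarrow> real" where
  "fractal x N \<alpha> f b = (SOME h. L2 (Ival x N) h \<and>
      (AE t in lebesgue_on (Ival x N). Top x N \<alpha> f b h t = h t))"

definition riesz_seq :: "real set \<Rightarrow> (nat \<Rightarrow> real \<Rightarrow> real) \<Rightarrow> bool" where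
  "riesz_seq I F \<longleftrightarrow> (\<forall>m. L2 I (F m)) \<and>
     (\<exists>A B. 0 < A \<and> 0 < B \<and>
        (\<forall>S c. finite S \<longrightarrow>
           A * (\<Sum>m\<in>S. (c m)\<^sup>2) \<le> L2norm_sq I (\<lambda>t. \<Sum>m\<in>S. c m * F m t) \<and>
           L2norm_sq I (\<lambda>t. \<Sum>m\<in>S. c m * F m t) \<le> B * (\<Sum>m\<in>S. (c m)\<^sup>2)))"

end

theory Submission
  imports Defs
begin

(* Write T g = f + M g, where M g = (alpha_n o L_n^-1) (g o L_n^-1) on I_n is linear (Tlin below).
   Substituting t = L_n s on each piece gives ||M g||^2 <= Lambda^2 ||g||^2, since the relative
   lengths (x_n - x_(n-1)) / (x_N - x_0) of the pieces sum to 1. Hence every fixed point h = f + M h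
   satisfies (1 - Lambda) ||h|| <= ||f|| <= (1 + Lambda) ||h||. A fixed point exists: the Neumann
   series sum_k M^k f converges almost everywhere (Cauchy-Schwarz with weights Lambda^k) to an
   L^2 function. As M is linear, sum_m c_m h_m is a fixed point for sum_m c_m f_m whenever each h_m
   is one for f_m, so the Riesz bounds A, B of (f_m) become A / (1 + Lambda)^2 and
   B / (1 - Lambda)^2. *)

section \<open>Square-integrable functions\<close>

lemma L2_add:
  assumes f: "L2 J f" and g: "L2 J g"
  shows "L2 J (\<lambda>t. f t + g t)"
proof -
  have fm: "f \<in> borel_measurable (lebesgue_on J)" and gm: "g \<in> borel_measurable (lebesgue_on J)"
    using f g by (auto simp: L2_def)
  have "integrable (lebesgue_on J) (\<lambda>t. 2 * (f t)\<^sup>2 + 2 * (g t)\<^sup>2)"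
    using f g by (auto simp: L2_def)
  then have "integrable (lebesgue_on J) (\<lambda>t. (f t + g t)\<^sup>2)"
  proof (rule Bochner_Integration.integrable_bound)
    show "(\<lambda>t. (f t + g t)\<^sup>2) \<in> borel_measurable (lebesgue_on J)"
      using fm gm by measurable
    have "(a + b)\<^sup>2 \<le> 2 * a\<^sup>2 + 2 * b\<^sup>2" for a b :: real
      using zero_le_power2[of "a - b"] by (simp add: power2_eq_square algebra_simps)
    then show "AE t in lebesgue_on J. norm ((f t + g t)\<^sup>2) \<le> norm (2 * (f t)\<^sup>2 + 2 * (g t)\<^sup>2)"
      by simp
  qed
  then show ?thesis
    using fm gm by (simp add: L2_def)
qed

lemma L2_cmult:
  assumes "L2 J f"
  shows "L2 J (\<lambda>t. c * f t)"
  using assms by (auto simp: L2_def power_mult_distrib)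

lemma L2_sum:
  assumes "finite S" and "\<And>m. m \<in> S \<Longrightarrow> L2 J (F m)"
  shows "L2 J (\<lambda>t. \<Sum>m\<in>S. c m * F m t)"
  using assms
proof (induction S rule: finite_induct)
  case (insert a S)
  then show ?case
    using L2_add[OF L2_cmult] by simp
qed (simp add: L2_def)

lemma L2norm_sq_nonneg: "0 \<le> L2norm_sq J g"
  unfolding L2norm_sq_def by (rule integral_nonneg_AE) auto

lemma nn_integral_power2_eq_L2norm_sq:
  assumes "L2 J g"
  shows "(\<integral>\<^sup>+t. ennreal ((g t)\<^sup>2) \<partial>lebesgue_on J) = ennreal (L2norm_sq J g)"
  using assms unfolding L2_def L2norm_sq_def by (intro nn_integral_eq_integral) auto

lemma power2_add_le_weighted:
  fixes a b p :: real
  assumes "0 < p" "p < 1"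
  shows "(a + b)\<^sup>2 \<le> a\<^sup>2 / p + b\<^sup>2 / (1 - p)"
proof -
  have "a\<^sup>2 / p + b\<^sup>2 / (1 - p) - (a + b)\<^sup>2 = ((1 - p) * a - p * b)\<^sup>2 / (p * (1 - p))"
    using assms by (simp add: field_simps power2_eq_square)
  also have "\<dots> \<ge> 0"
    using assms by simp
  finally show ?thesis by simp
qed

(* A square-root-free triangle inequality; the best p gives ||h|| <= ||f|| + ||g||. *)
lemma L2norm_sq_le_weighted:
  assumes "L2 J h" "L2 J f" "L2 J g" and "AE t in lebesgue_on J. h t = f t + g t"
    and "0 < p" "p < 1"
  shows "L2norm_sq J h \<le> L2norm_sq J f / p + L2norm_sq J g / (1 - p)"
proof -
  have "L2norm_sq J h \<le> (\<integral>t. (f t)\<^sup>2 / p + (g t)\<^sup>2 / (1 - p) \<partial>lebesgue_on J)"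
    unfolding L2norm_sq_def
  proof (rule integral_mono_AE)
    show "AE t in lebesgue_on J. (h t)\<^sup>2 \<le> (f t)\<^sup>2 / p + (g t)\<^sup>2 / (1 - p)"
      using assms(4) by eventually_elim (use power2_add_le_weighted assms(5,6) in auto)
  qed (use assms(1-3) in \<open>auto simp: L2_def\<close>)
  also have "\<dots> = L2norm_sq J f / p + L2norm_sq J g / (1 - p)"
    using assms(2,3) by (simp add: L2_def L2norm_sq_def)
  finally show ?thesis .
qed

lemma summable_and_power2_suminf_le:
  fixes g w :: "nat \<Rightarrow> real"
  assumes L: "0 < L" "L < 1" and w: "\<And>k. 0 \<le> w k" "summable w"
    and g: "\<And>k. (g k)\<^sup>2 = L ^ k * w k"
  shows "summable g" "(suminf g)\<^sup>2 \<le> suminf w / (1 - L)"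
proof -
  define C where "C = suminf w / (1 - L)"
  have abs_g: "\<bar>g k\<bar> = sqrt (L ^ k) * sqrt (w k)" for k
    by (metis g real_sqrt_abs real_sqrt_mult)
  have "(\<Sum>k<n. \<bar>g k\<bar>)\<^sup>2 \<le> C" for n
  proof -
    have "(\<Sum>k<n. \<bar>g k\<bar>)\<^sup>2 \<le> (\<Sum>k<n. (sqrt (L ^ k))\<^sup>2) * (\<Sum>k<n. (sqrt (w k))\<^sup>2)"
      unfolding abs_g by (rule Cauchy_Schwarz_ineq_sum)
    also have "\<dots> = (\<Sum>k<n. L ^ k) * (\<Sum>k<n. w k)"
      using L w by simp
    also have "\<dots> \<le> (\<Sum>k. L ^ k) * suminf w"
      using L w by (intro mult_mono sum_le_suminf summable_geometric suminf_nonneg sum_nonneg) auto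
    finally show ?thesis
      using L by (simp add: C_def suminf_geometric divide_inverse mult.commute)
  qed
  then have partial_le: "(\<Sum>k<n. \<bar>g k\<bar>) \<le> sqrt C" for n
    using real_le_rsqrt by blast
  then have abs_summable: "summable (\<lambda>k. \<bar>g k\<bar>)"
    by (intro summableI_nonneg_bounded) auto
  then show "summable g"
    by (rule summable_rabs_cancel)
  have "\<bar>suminf g\<bar> \<le> sqrt C"
    using summable_rabs[OF abs_summable] suminf_le_const[OF abs_summable partial_le] by linarith
  then show "(suminf g)\<^sup>2 \<le> suminf w / (1 - L)"
    unfolding C_def by (metis abs_ge_zero power2_abs real_sqrt_le_iff real_sqrt_unique sqrt_le_D)
qed

section \<open>The partition and the affine maps\<close>

locale fractal_operator =
  fixes x :: "nat \<Rightarrow> real" and N :: nat and \<alpha> :: "nat \<Rightarrow> real \<Rightarrow> real" and \<Lambda> :: real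
  assumes N_pos: "1 \<le> N"
    and x_step: "\<And>k. k < N \<Longrightarrow> x k < x (Suc k)"
    and \<alpha>_measurable: "\<And>n. n \<in> {1..N} \<Longrightarrow> \<alpha> n \<in> borel_measurable (lebesgue_on (Ival x N))"
    and \<Lambda>_pos: "0 < \<Lambda>" and \<Lambda>_less_1: "\<Lambda> < 1"
    and \<alpha>_bound: "\<And>n. n \<in> {1..N} \<Longrightarrow> AE t in lebesgue_on (Ival x N). \<bar>\<alpha> n t\<bar> \<le> \<Lambda>"
begin

abbreviation I :: "real set" where
  "I \<equiv> Ival x N"

lemma x_strict_mono: "i < j \<Longrightarrow> j \<le> N \<Longrightarrow> x i < x j"
proof (induction j)
  case (Suc j)
  then show ?case
    using x_step[of j] by (cases "i = j") auto
qed simp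

lemma x_mono: "i \<le> j \<Longrightarrow> j \<le> N \<Longrightarrow> x i \<le> x j"
  using x_strict_mono by (cases "i = j") (auto intro: less_imp_le)

lemma Ival_sets [simp]: "I \<in> sets lebesgue" "I \<inter> space lebesgue \<in> sets lebesgue"
  by (simp_all add: Ival_def)

lemma Isub_sets [simp]: "Isub x n \<in> sets lebesgue"
  by (simp add: Isub_def)

lemma Isub_subset_Ival:
  assumes "n \<in> {1..N}"
  shows "Isub x n \<subseteq> I"
proof -
  have "x 0 \<le> x (n - 1)" "x n \<le> x N" "x 0 \<le> x 1" "x 1 \<le> x N"
    using x_mono[of 0 "n - 1"] x_mono[of n N] x_mono[of 0 1] x_mono[of 1 N] N_pos assms by auto
  then show ?thesis
    by (auto simp: Isub_def Ival_def)
qed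

lemma Ival_covered_by_Isub:
  assumes "t \<in> I"
  shows "\<exists>n\<in>{1..N}. t \<in> Isub x n"
proof -
  have "\<exists>n\<in>{1..Suc m}. t \<in> Isub x n" if "Suc m \<le> N" "t \<in> {x 0..x (Suc m)}" for m
    using that
  proof (induction m)
    case (Suc m)
    show ?case
    proof (cases "t \<le> x (Suc m)")
      case False
      then have "t \<in> Isub x (Suc (Suc m))"
        using Suc.prems by (auto simp: Isub_def)
      then show ?thesis by force
    qed (use Suc in force)
  qed (auto simp: Isub_def)
  from this[of "N - 1"] show ?thesis
    using assms N_pos by (simp add: Ival_def)
qed

lemma Isub_disjoint:
  assumes "n \<in> {1..N}" "n' \<in> {1..N}" "t \<in> Isub x n" "t \<in> Isub x n'"
  shows "n = n'"
proof -
  have False if "n < n'" "n \<in> {1..N}" "n' \<in> {1..N}" "t \<in> Isub x n" "t \<in> Isub x n'" for n n'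
  proof -
    have "t \<le> x n" "x (n' - 1) < t"
      using that by (auto simp: Isub_def split: if_splits)
    moreover have "x n \<le> x (n' - 1)"
      using x_mono[of n "n' - 1"] that by auto
    ultimately show False by simp
  qed
  then show ?thesis
    using assms by (metis linorder_neqE_nat)
qed

lemma Isub_length_pos: "n \<in> {1..N} \<Longrightarrow> 0 < x n - x (n - 1)"
  using x_strict_mono[of "n - 1" n] by auto

lemma Ival_length_pos: "0 < x N - x 0"
  using x_strict_mono[of 0 N] N_pos by auto

lemma Linv_in_Ival:
  assumes n: "n \<in> {1..N}" and t: "t \<in> Isub x n"
  shows "Linv x N n t \<in> I"
proof -
  define d where "d = x n - x (n - 1)"
  define D where "D = x N - x 0"
  have d: "0 < d" and D: "0 < D"
    using Isub_length_pos[OF n] Ival_length_pos by (simp_all add: d_def D_def)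
  have "0 \<le> t - x (n - 1)" "t - x (n - 1) \<le> d"
    using t n by (auto simp: Isub_def d_def split: if_splits)
  moreover have "D / d * (t - x (n - 1)) \<le> D / d * d"
    by (rule mult_left_mono) (use d D \<open>t - x (n - 1) \<le> d\<close> in auto)
  ultimately have "0 \<le> D / d * (t - x (n - 1))" "D / d * (t - x (n - 1)) \<le> D"
    using d D by auto
  then show ?thesis
    by (simp add: Linv_def Ival_def D_def d_def)
qed

lemma Linv_affine:
  "Linv x N n = (\<lambda>t. (x 0 - (x N - x 0) / (x n - x (n - 1)) * x (n - 1))
                      + (x N - x 0) / (x n - x (n - 1)) * t)"
proof -
  have "a + r * (t - c) = (a - r * c) + r * t" for a r c t :: real
    by (simp add: algebra_simps)
  then show ?thesis
    unfolding Linv_def by (intro ext) blast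
qed

lemma measurable_comp_Linv:
  fixes \<phi> :: "real \<Rightarrow> 'b::topological_space"
  assumes "\<phi> \<in> borel_measurable lebesgue" and n: "n \<in> {1..N}"
  shows "(\<lambda>t. \<phi> (Linv x N n t)) \<in> borel_measurable lebesgue"
proof -
  define e where "e = (x N - x 0) / (x n - x (n - 1))"
  have "e \<noteq> 0"
    using Isub_length_pos[OF n] Ival_length_pos by (simp add: e_def)
  then have "Linv x N n \<in> lebesgue \<rightarrow>\<^sub>M lebesgue"
    using lebesgue_affine_measurable[where c="\<lambda>_. e" and t="x 0 - e * x (n - 1)"]
    by (simp add: Linv_affine e_def)
  then show ?thesis
    using assms(1) by (rule measurable_compose)
qed

lemma nn_integral_comp_Linv:
  fixes \<phi> :: "real \<Rightarrow> ennreal"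
  assumes \<phi>: "\<phi> \<in> borel_measurable lebesgue" and n: "n \<in> {1..N}"
  shows "(\<integral>\<^sup>+t. \<phi> (Linv x N n t) \<partial>lebesgue)
           = ennreal ((x n - x (n - 1)) / (x N - x 0)) * (\<integral>\<^sup>+s. \<phi> s \<partial>lebesgue)"
proof -
  define e where "e = (x N - x 0) / (x n - x (n - 1))"
  define c where "c = x 0 - e * x (n - 1)"
  have e: "0 < e"
    using Isub_length_pos[OF n] Ival_length_pos by (simp add: e_def)
  have "(\<integral>\<^sup>+s. \<phi> s \<partial>lebesgue) = ennreal e * (\<integral>\<^sup>+t. \<phi> (c + e * t) \<partial>lebesgue)"
    using nn_integral_real_affine_lebesgue[OF \<phi>, of e c] e by simp
  then have "ennreal (1 / e) * (\<integral>\<^sup>+s. \<phi> s \<partial>lebesgue) = (\<integral>\<^sup>+t. \<phi> (c + e * t) \<partial>lebesgue)"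
    using e by (simp add: mult.assoc[symmetric] ennreal_mult[symmetric])
  moreover have "Linv x N n = (\<lambda>t. c + e * t)"
    by (simp add: Linv_affine c_def e_def)
  ultimately show ?thesis
    by (simp add: e_def)
qed

section \<open>The linear part of the operator\<close>

definition Tlin :: "(real \<Rightarrow> real) \<Rightarrow> real \<Rightarrow> real" where
  "Tlin g t = (\<Sum>n=1..N. indicator (Isub x n) t * (\<alpha> n (Linv x N n t) * g (Linv x N n t)))"

lemma Top_zero_eq: "Top x N \<alpha> f (\<lambda>_. 0) g t = f t + Tlin g t"
  by (simp add: Top_def Tlin_def)

lemma Tlin_on_Isub:
  assumes n: "n \<in> {1..N}" and t: "t \<in> Isub x n"
  shows "Tlin g t = \<alpha> n (Linv x N n t) * g (Linv x N n t)"
proof -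
  have "Tlin g t = (\<Sum>k\<in>{n}. indicator (Isub x k) t * (\<alpha> k (Linv x N k t) * g (Linv x N k t)))"
    unfolding Tlin_def
    by (rule sum.mono_neutral_right) (use n t Isub_disjoint in \<open>auto simp: indicator_def\<close>)
  then show ?thesis
    using t by simp
qed

lemma Tlin_sum: "Tlin (\<lambda>t. \<Sum>m\<in>S. c m * G m t) t = (\<Sum>m\<in>S. c m * Tlin (G m) t)"
  unfolding Tlin_def sum_distrib_left
  by (subst sum.swap) (simp add: sum_distrib_left mult_ac)

lemma measurable_indicator_Isub_comp_Linv:
  fixes \<phi> :: "real \<Rightarrow> real"
  assumes \<phi>: "\<phi> \<in> borel_measurable (lebesgue_on I)" and n: "n \<in> {1..N}"
  shows "(\<lambda>t. indicator (Isub x n) t * \<phi> (Linv x N n t)) \<in> borel_measurable lebesgue"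
proof -
  have "(\<lambda>s. indicator I s * \<phi> s) \<in> borel_measurable lebesgue"
    using \<phi> borel_measurable_restrict_space_iff[of I lebesgue \<phi>] by simp
  then have "(\<lambda>t. indicator I (Linv x N n t) * \<phi> (Linv x N n t)) \<in> borel_measurable lebesgue"
    using measurable_comp_Linv[OF _ n] by blast
  then have "(\<lambda>t. indicator (Isub x n) t * (indicator I (Linv x N n t) * \<phi> (Linv x N n t)))
               \<in> borel_measurable lebesgue"
    by (rule borel_measurable_times[OF borel_measurable_indicator[OF Isub_sets]])
  moreover have "indicator (Isub x n) t * (indicator I (Linv x N n t) * \<phi> (Linv x N n t))
                   = indicator (Isub x n) t * \<phi> (Linv x N n t)" for t
    using Linv_in_Ival[OF n] by (cases "t \<in> Isub x n") auto
  ultimately show ?thesis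
    by simp
qed

lemma Tlin_measurable:
  assumes "g \<in> borel_measurable (lebesgue_on I)"
  shows "Tlin g \<in> borel_measurable (lebesgue_on I)"
proof -
  have "(\<lambda>s. \<alpha> n s * g s) \<in> borel_measurable (lebesgue_on I)" if "n \<in> {1..N}" for n
    using \<alpha>_measurable[OF that] assms by measurable
  then have "Tlin g \<in> borel_measurable lebesgue"
    unfolding Tlin_def[abs_def]
    by (intro borel_measurable_sum measurable_indicator_Isub_comp_Linv) auto
  then show ?thesis
    by (rule measurable_restrict_space1)
qed

lemma Isub_length_ratio_sum: "(\<Sum>n=1..N. ennreal ((x n - x (n - 1)) / (x N - x 0))) = 1"
proof -
  have "(\<Sum>n=1..N. ennreal ((x n - x (n - 1)) / (x N - x 0)))
          = ennreal (\<Sum>n=1..N. (x n - x (n - 1)) / (x N - x 0))"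
    using Isub_length_pos Ival_length_pos by (intro sum_ennreal) (simp add: less_imp_le)
  also have "(\<Sum>n=1..N. (x n - x (n - 1)) / (x N - x 0)) = 1"
    using sum_telescope''[of 0 N x] Ival_length_pos by (simp add: sum_divide_distrib[symmetric])
  finally show ?thesis
    by simp
qed

lemma nn_integral_alpha_sq_le:
  assumes g: "g \<in> borel_measurable (lebesgue_on I)" and n: "n \<in> {1..N}"
  shows "(\<integral>\<^sup>+s. ennreal ((\<alpha> n s * g s)\<^sup>2) \<partial>lebesgue_on I)
           \<le> ennreal (\<Lambda>\<^sup>2) * (\<integral>\<^sup>+s. ennreal ((g s)\<^sup>2) \<partial>lebesgue_on I)"
proof -
  have "(\<integral>\<^sup>+s. ennreal ((\<alpha> n s * g s)\<^sup>2) \<partial>lebesgue_on I)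
          \<le> (\<integral>\<^sup>+s. ennreal (\<Lambda>\<^sup>2) * ennreal ((g s)\<^sup>2) \<partial>lebesgue_on I)"
    using \<alpha>_bound[OF n]
  proof (intro nn_integral_mono_AE, eventually_elim)
    case (elim s)
    then have "(\<alpha> n s)\<^sup>2 \<le> \<Lambda>\<^sup>2"
      by (metis abs_ge_zero power2_abs power_mono)
    then have "(\<alpha> n s * g s)\<^sup>2 \<le> \<Lambda>\<^sup>2 * (g s)\<^sup>2"
      by (simp add: power_mult_distrib mult_right_mono)
    then show ?case
      by (simp add: ennreal_mult[symmetric] ennreal_leI)
  qed
  also have "\<dots> = ennreal (\<Lambda>\<^sup>2) * (\<integral>\<^sup>+s. ennreal ((g s)\<^sup>2) \<partial>lebesgue_on I)"
    using g by (intro nn_integral_cmult) measurable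
  finally show ?thesis .
qed

lemma Tlin_sq_le_sum_comp_Linv:
  "ennreal ((Tlin g t)\<^sup>2) * indicator I t
     \<le> (\<Sum>n=1..N. ennreal ((\<alpha> n (Linv x N n t) * g (Linv x N n t))\<^sup>2) * indicator I (Linv x N n t))"
proof (cases "t \<in> I")
  case True
  then obtain n where n: "n \<in> {1..N}" "t \<in> Isub x n"
    using Ival_covered_by_Isub by blast
  then have "ennreal ((Tlin g t)\<^sup>2) * indicator I t
               = ennreal ((\<alpha> n (Linv x N n t) * g (Linv x N n t))\<^sup>2) * indicator I (Linv x N n t)"
    using True Linv_in_Ival[OF n] by (simp add: Tlin_on_Isub)
  also have "\<dots> \<le> (\<Sum>n=1..N. ennreal ((\<alpha> n (Linv x N n t) * g (Linv x N n t))\<^sup>2) * indicator I (Linv x N n t))"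
    using n by (intro member_le_sum) auto
  finally show ?thesis .
qed simp

lemma nn_integral_Tlin_sq_le:
  assumes g: "g \<in> borel_measurable (lebesgue_on I)"
  shows "(\<integral>\<^sup>+t. ennreal ((Tlin g t)\<^sup>2) \<partial>lebesgue_on I)
           \<le> ennreal (\<Lambda>\<^sup>2) * (\<integral>\<^sup>+t. ennreal ((g t)\<^sup>2) \<partial>lebesgue_on I)"
proof -
  define X where "X = (\<integral>\<^sup>+t. ennreal ((g t)\<^sup>2) \<partial>lebesgue_on I)"
  define r where "r n = (x n - x (n - 1)) / (x N - x 0)" for n
  define \<psi> where "\<psi> n s = ennreal ((\<alpha> n s * g s)\<^sup>2) * indicator I s" for n s
  have \<psi>_measurable: "\<psi> n \<in> borel_measurable lebesgue" if n: "n \<in> {1..N}" for n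
  proof -
    have "(\<lambda>s. ennreal ((\<alpha> n s * g s)\<^sup>2)) \<in> borel_measurable (lebesgue_on I)"
      using \<alpha>_measurable[OF n] g by measurable
    then show ?thesis
      unfolding \<psi>_def[abs_def] by (metis borel_measurable_restrict_space_iff_ennreal Ival_sets(2))
  qed
  have "(\<integral>\<^sup>+t. ennreal ((Tlin g t)\<^sup>2) \<partial>lebesgue_on I)
          = (\<integral>\<^sup>+t. ennreal ((Tlin g t)\<^sup>2) * indicator I t \<partial>lebesgue)"
    by (simp add: nn_integral_restrict_space)
  also have "\<dots> \<le> (\<integral>\<^sup>+t. (\<Sum>n=1..N. \<psi> n (Linv x N n t)) \<partial>lebesgue)"
    unfolding \<psi>_def by (intro nn_integral_mono Tlin_sq_le_sum_comp_Linv)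
  also have "\<dots> = (\<Sum>n=1..N. \<integral>\<^sup>+t. \<psi> n (Linv x N n t) \<partial>lebesgue)"
    using \<psi>_measurable by (intro nn_integral_sum) (simp add: measurable_comp_Linv)
  also have "\<dots> = (\<Sum>n=1..N. ennreal (r n) * (\<integral>\<^sup>+s. \<psi> n s \<partial>lebesgue))"
    using \<psi>_measurable by (intro sum.cong) (simp_all add: nn_integral_comp_Linv r_def)
  also have "\<dots> \<le> (\<Sum>n=1..N. ennreal (r n) * (ennreal (\<Lambda>\<^sup>2) * X))"
    using nn_integral_alpha_sq_le[OF g]
    by (intro sum_mono mult_left_mono) (simp_all add: \<psi>_def X_def nn_integral_restrict_space)
  also have "\<dots> = ennreal (\<Lambda>\<^sup>2) * X"
    using Isub_length_ratio_sum by (simp add: sum_distrib_right[symmetric] r_def)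
  finally show ?thesis
    by (simp add: X_def)
qed

lemma L2_Tlin:
  assumes g: "L2 I g"
  shows "L2 I (Tlin g)" and "L2norm_sq I (Tlin g) \<le> \<Lambda>\<^sup>2 * L2norm_sq I g"
proof -
  have g_measurable: "g \<in> borel_measurable (lebesgue_on I)"
    using g by (simp add: L2_def)
  have bound: "(\<integral>\<^sup>+t. ennreal ((Tlin g t)\<^sup>2) \<partial>lebesgue_on I) \<le> ennreal (\<Lambda>\<^sup>2 * L2norm_sq I g)"
    using nn_integral_Tlin_sq_le[OF g_measurable] nn_integral_power2_eq_L2norm_sq[OF g]
    by (simp add: ennreal_mult L2norm_sq_nonneg)
  have "integrable (lebesgue_on I) (\<lambda>t. (Tlin g t)\<^sup>2)"
    using Tlin_measurable[OF g_measurable] bound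
    by (intro integrableI_bounded) (auto intro: le_less_trans)
  then show L2: "L2 I (Tlin g)"
    using Tlin_measurable[OF g_measurable] by (simp add: L2_def)
  show "L2norm_sq I (Tlin g) \<le> \<Lambda>\<^sup>2 * L2norm_sq I g"
    using bound nn_integral_power2_eq_L2norm_sq[OF L2] L2norm_sq_nonneg[of I g]
    by (simp add: ennreal_le_iff)
qed

section \<open>The Neumann series\<close>

lemma iterate_Tlin_measurable:
  "f \<in> borel_measurable (lebesgue_on I) \<Longrightarrow> (Tlin ^^ k) f \<in> borel_measurable (lebesgue_on I)"
  by (induction k) (simp_all add: Tlin_measurable)

lemma nn_integral_iterate_Tlin_sq_le:
  assumes f: "f \<in> borel_measurable (lebesgue_on I)"
  shows "(\<integral>\<^sup>+t. ennreal (((Tlin ^^ k) f t)\<^sup>2) \<partial>lebesgue_on I)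
           \<le> ennreal (\<Lambda> ^ (2 * k)) * (\<integral>\<^sup>+t. ennreal ((f t)\<^sup>2) \<partial>lebesgue_on I)"
proof (induction k)
  case (Suc k)
  have "(\<integral>\<^sup>+t. ennreal (((Tlin ^^ Suc k) f t)\<^sup>2) \<partial>lebesgue_on I)
          \<le> ennreal (\<Lambda>\<^sup>2) * (\<integral>\<^sup>+t. ennreal (((Tlin ^^ k) f t)\<^sup>2) \<partial>lebesgue_on I)"
    using nn_integral_Tlin_sq_le[OF iterate_Tlin_measurable[OF f]] by simp
  also have "\<dots> \<le> ennreal (\<Lambda>\<^sup>2) * (ennreal (\<Lambda> ^ (2 * k)) * (\<integral>\<^sup>+t. ennreal ((f t)\<^sup>2) \<partial>lebesgue_on I))"
    by (rule mult_left_mono[OF Suc.IH]) simp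
  also have "\<dots> = ennreal (\<Lambda> ^ (2 * Suc k)) * (\<integral>\<^sup>+t. ennreal ((f t)\<^sup>2) \<partial>lebesgue_on I)"
    using \<Lambda>_pos by (simp add: mult.assoc[symmetric] ennreal_mult[symmetric] power_add power2_eq_square)
  finally show ?case .
qed simp

(* The factor Lambda^-k offsets the decay Lambda^(2k) of the norms of Tlin^k f, so the weight stays
   integrable, while Cauchy-Schwarz against Lambda^k bounds the Neumann series by it. *)
definition neumann_weight :: "(real \<Rightarrow> real) \<Rightarrow> real \<Rightarrow> ennreal" where
  "neumann_weight f t = (\<Sum>k. ennreal (((Tlin ^^ k) f t)\<^sup>2 / \<Lambda> ^ k))"

lemma neumann_weight_measurable:
  assumes "f \<in> borel_measurable (lebesgue_on I)"
  shows "neumann_weight f \<in> borel_measurable (lebesgue_on I)"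
proof -
  have "(\<lambda>t. ennreal (((Tlin ^^ k) f t)\<^sup>2 / \<Lambda> ^ k)) \<in> borel_measurable (lebesgue_on I)" for k
    using iterate_Tlin_measurable[OF assms, of k] by measurable
  then show ?thesis
    unfolding neumann_weight_def[abs_def] by (rule borel_measurable_suminf_order)
qed

lemma nn_integral_neumann_weight_finite:
  assumes f: "L2 I f"
  shows "(\<integral>\<^sup>+t. neumann_weight f t \<partial>lebesgue_on I) < \<infinity>"
proof -
  define X where "X = (\<integral>\<^sup>+t. ennreal ((f t)\<^sup>2) \<partial>lebesgue_on I)"
  have f_measurable: "f \<in> borel_measurable (lebesgue_on I)"
    using f by (simp add: L2_def)
  have term_le: "(\<integral>\<^sup>+t. ennreal (((Tlin ^^ k) f t)\<^sup>2 / \<Lambda> ^ k) \<partial>lebesgue_on I) \<le> ennreal (\<Lambda> ^ k) * X" for k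
  proof -
    have "(\<integral>\<^sup>+t. ennreal (((Tlin ^^ k) f t)\<^sup>2 / \<Lambda> ^ k) \<partial>lebesgue_on I)
            = ennreal (1 / \<Lambda> ^ k) * (\<integral>\<^sup>+t. ennreal (((Tlin ^^ k) f t)\<^sup>2) \<partial>lebesgue_on I)"
      using \<Lambda>_pos iterate_Tlin_measurable[OF f_measurable, of k]
      by (subst nn_integral_cmult[symmetric]) (auto simp: ennreal_mult[symmetric] intro!: nn_integral_cong)
    also have "\<dots> \<le> ennreal (1 / \<Lambda> ^ k) * (ennreal (\<Lambda> ^ (2 * k)) * X)"
      using nn_integral_iterate_Tlin_sq_le[OF f_measurable] by (intro mult_left_mono) (simp_all add: X_def)
    also have "\<dots> = ennreal (\<Lambda> ^ k) * X"
      using \<Lambda>_pos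
      by (simp add: mult.assoc[symmetric] ennreal_mult[symmetric] power_mult power2_eq_square power_mult_distrib)
    finally show ?thesis .
  qed
  have "(\<integral>\<^sup>+t. neumann_weight f t \<partial>lebesgue_on I)
          = (\<Sum>k. \<integral>\<^sup>+t. ennreal (((Tlin ^^ k) f t)\<^sup>2 / \<Lambda> ^ k) \<partial>lebesgue_on I)"
    unfolding neumann_weight_def
    by (intro nn_integral_suminf) (use iterate_Tlin_measurable[OF f_measurable] in measurable)
  also have "\<dots> \<le> (\<Sum>k. ennreal (\<Lambda> ^ k) * X)"
    by (intro suminf_le) (use term_le in auto)
  also have "\<dots> = ennreal (1 / (1 - \<Lambda>)) * X"
    using \<Lambda>_pos \<Lambda>_less_1 by (simp add: ennreal_suminf_multc suminf_ennreal2 suminf_geometric)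
  also have "\<dots> < \<infinity>"
    using \<Lambda>_less_1 nn_integral_power2_eq_L2norm_sq[OF f]
    by (simp add: X_def ennreal_mult[symmetric] L2norm_sq_nonneg)
  finally show ?thesis .
qed

lemma neumann_series_at:
  assumes "neumann_weight f s \<noteq> \<infinity>"
  shows "summable (\<lambda>k. (Tlin ^^ k) f s)"
    and "ennreal ((\<Sum>k. (Tlin ^^ k) f s)\<^sup>2) \<le> ennreal (1 / (1 - \<Lambda>)) * neumann_weight f s"
proof -
  define w where "w k = ((Tlin ^^ k) f s)\<^sup>2 / \<Lambda> ^ k" for k
  have w_nonneg: "0 \<le> w k" for k
    using \<Lambda>_pos by (simp add: w_def)
  have w_summable: "summable w"
    using assms w_nonneg by (intro summable_suminf_not_top) (auto simp: neumann_weight_def w_def)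
  have "((Tlin ^^ k) f s)\<^sup>2 = \<Lambda> ^ k * w k" for k
    using \<Lambda>_pos by (simp add: w_def)
  note series = summable_and_power2_suminf_le[OF \<Lambda>_pos \<Lambda>_less_1 w_nonneg w_summable this]
  then show "summable (\<lambda>k. (Tlin ^^ k) f s)"
    by simp
  have "neumann_weight f s = (\<Sum>k. ennreal (w k))"
    by (simp add: neumann_weight_def w_def)
  also have "\<dots> = ennreal (suminf w)"
    using w_nonneg w_summable by (simp add: suminf_ennreal2)
  finally have weight: "neumann_weight f s = ennreal (suminf w)" .
  have "ennreal ((\<Sum>k. (Tlin ^^ k) f s)\<^sup>2) \<le> ennreal (1 / (1 - \<Lambda>) * suminf w)"
    using series(2) by (intro ennreal_leI) simp
  also have "\<dots> = ennreal (1 / (1 - \<Lambda>)) * neumann_weight f s"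
    unfolding weight by (rule ennreal_mult) (use \<Lambda>_less_1 suminf_nonneg[OF w_summable w_nonneg] in auto)
  finally show "ennreal ((\<Sum>k. (Tlin ^^ k) f s)\<^sup>2) \<le> ennreal (1 / (1 - \<Lambda>)) * neumann_weight f s" .
qed

lemma L2_neumann_series:
  assumes f: "L2 I f"
  shows "L2 I (\<lambda>t. \<Sum>k. (Tlin ^^ k) f t)"
proof -
  have f_measurable: "f \<in> borel_measurable (lebesgue_on I)"
    using f by (simp add: L2_def)
  have h_measurable: "(\<lambda>t. \<Sum>k. (Tlin ^^ k) f t) \<in> borel_measurable (lebesgue_on I)"
    by (intro borel_measurable_suminf iterate_Tlin_measurable[OF f_measurable])
  have weight_finite: "AE t in lebesgue_on I. neumann_weight f t \<noteq> \<infinity>"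
    using nn_integral_neumann_weight_finite[OF f]
    by (intro nn_integral_PInf_AE neumann_weight_measurable f_measurable) auto
  have "(\<integral>\<^sup>+t. ennreal (norm ((\<Sum>k. (Tlin ^^ k) f t)\<^sup>2)) \<partial>lebesgue_on I)
          \<le> (\<integral>\<^sup>+t. ennreal (1 / (1 - \<Lambda>)) * neumann_weight f t \<partial>lebesgue_on I)"
    using weight_finite by (intro nn_integral_mono_AE) (auto elim!: eventually_mono simp: neumann_series_at)
  also have "\<dots> = ennreal (1 / (1 - \<Lambda>)) * (\<integral>\<^sup>+t. neumann_weight f t \<partial>lebesgue_on I)"
    by (intro nn_integral_cmult neumann_weight_measurable f_measurable)
  also have "\<dots> < \<infinity>"
    using nn_integral_neumann_weight_finite[OF f] by (simp add: ennreal_mult_less_top)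
  finally show ?thesis
    using h_measurable by (simp add: L2_def integrableI_bounded)
qed

lemma AE_neumann_weight_finite_comp_Linv:
  assumes f: "L2 I f"
  shows "AE t in lebesgue. \<forall>n\<in>{1..N}. t \<in> Isub x n \<longrightarrow> neumann_weight f (Linv x N n t) \<noteq> \<infinity>"
proof -
  define W where "W s = neumann_weight f s * indicator I s" for s
  have "neumann_weight f \<in> borel_measurable (lebesgue_on I)"
    using f by (simp add: L2_def neumann_weight_measurable)
  then have W_measurable: "W \<in> borel_measurable lebesgue"
    unfolding W_def[abs_def] by (metis borel_measurable_restrict_space_iff_ennreal Ival_sets(2))
  have W_finite: "(\<integral>\<^sup>+s. W s \<partial>lebesgue) \<noteq> \<infinity>"
    using nn_integral_neumann_weight_finite[OF f] by (simp add: W_def nn_integral_restrict_space)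
  have "AE t in lebesgue. W (Linv x N n t) \<noteq> \<infinity>" if n: "n \<in> {1..N}" for n
  proof (rule nn_integral_PInf_AE[OF measurable_comp_Linv[OF W_measurable n]])
    show "(\<integral>\<^sup>+t. W (Linv x N n t) \<partial>lebesgue) \<noteq> \<infinity>"
      using W_finite by (simp add: nn_integral_comp_Linv[OF W_measurable n] ennreal_mult_eq_top_iff)
  qed
  then have "AE t in lebesgue. \<forall>n\<in>{1..N}. W (Linv x N n t) \<noteq> \<infinity>"
    by (intro AE_finite_allI) auto
  then show ?thesis
    by (rule eventually_mono) (auto simp: W_def Linv_in_Ival)
qed

lemma neumann_series_fixed_point:
  assumes f: "L2 I f"
  defines "h \<equiv> \<lambda>t. \<Sum>k. (Tlin ^^ k) f t"
  shows "AE t in lebesgue_on I. Top x N \<alpha> f (\<lambda>_. 0) h t = h t"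
proof -
  have "AE t in lebesgue. t \<in> I \<longrightarrow> h t = f t + Tlin h t"
    using AE_neumann_weight_finite_comp_Linv[OF f]
  proof eventually_elim
    case (elim t)
    show ?case
    proof
      assume "t \<in> I"
      then obtain n where n: "n \<in> {1..N}" "t \<in> Isub x n"
        using Ival_covered_by_Isub by blast
      define s where "s = Linv x N n t"
      have summable_s: "summable (\<lambda>k. (Tlin ^^ k) f s)"
        using elim n by (intro neumann_series_at) (simp add: s_def)
      have step: "Tlin ((Tlin ^^ k) f) t = \<alpha> n s * (Tlin ^^ k) f s" for k
        using Tlin_on_Isub[OF n] by (simp add: s_def)
      have "summable (\<lambda>k. (Tlin ^^ Suc k) f t)"
        using summable_mult[OF summable_s, of "\<alpha> n s"] by (simp add: step)
      then have summable_t: "summable (\<lambda>k. (Tlin ^^ k) f t)"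
        by (rule summable_Suc_iff[of "\<lambda>k. (Tlin ^^ k) f t", THEN iffD1])
      have "Tlin h t = (\<Sum>k. \<alpha> n s * (Tlin ^^ k) f s)"
        using Tlin_on_Isub[OF n] suminf_mult[OF summable_s] by (simp add: h_def s_def)
      also have "\<dots> = h t - f t"
        using suminf_split_head[OF summable_t] by (simp add: h_def step)
      finally show "h t = f t + Tlin h t"
        by simp
    qed
  qed
  then show ?thesis
    by (simp add: AE_restrict_space_iff Top_zero_eq eq_commute)
qed

lemma fractal_fixed_point:
  assumes "L2 I f"
  shows "L2 I (fractal x N \<alpha> f (\<lambda>_. 0))"
    and "AE t in lebesgue_on I. fractal x N \<alpha> f (\<lambda>_. 0) t = f t + Tlin (fractal x N \<alpha> f (\<lambda>_. 0)) t"
proof -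
  have "\<exists>h. L2 I h \<and> (AE t in lebesgue_on I. Top x N \<alpha> f (\<lambda>_. 0) h t = h t)"
    using L2_neumann_series[OF assms] neumann_series_fixed_point[OF assms] by blast
  then have "L2 I (fractal x N \<alpha> f (\<lambda>_. 0))
      \<and> (AE t in lebesgue_on I. Top x N \<alpha> f (\<lambda>_. 0) (fractal x N \<alpha> f (\<lambda>_. 0)) t = fractal x N \<alpha> f (\<lambda>_. 0) t)"
    unfolding fractal_def by (rule someI_ex)
  then show "L2 I (fractal x N \<alpha> f (\<lambda>_. 0))"
    and "AE t in lebesgue_on I. fractal x N \<alpha> f (\<lambda>_. 0) t = f t + Tlin (fractal x N \<alpha> f (\<lambda>_. 0)) t"
    by (auto simp: Top_zero_eq elim: eventually_mono)
qed

section \<open>Riesz bounds for fixed points\<close>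

lemma L2norm_sq_fixed_point_bounds:
  assumes h: "L2 I h" and f: "L2 I f" and fixed: "AE t in lebesgue_on I. h t = f t + Tlin h t"
  shows "(1 - \<Lambda>)\<^sup>2 * L2norm_sq I h \<le> L2norm_sq I f"
    and "L2norm_sq I f \<le> (1 + \<Lambda>)\<^sup>2 * L2norm_sq I h"
proof -
  define nh nf nTh where "nh = L2norm_sq I h" and "nf = L2norm_sq I f" and "nTh = L2norm_sq I (Tlin h)"
  have nTh: "nTh \<le> \<Lambda>\<^sup>2 * nh" and nh: "0 \<le> nh"
    using L2_Tlin[OF h] L2norm_sq_nonneg by (simp_all add: nh_def nTh_def)
  have "nh \<le> nf / (1 - \<Lambda>) + nTh / (1 - (1 - \<Lambda>))"
    unfolding nh_def nf_def nTh_def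
    by (rule L2norm_sq_le_weighted[OF h f L2_Tlin(1)[OF h] fixed]) (use \<Lambda>_pos \<Lambda>_less_1 in auto)
  also have "nTh / (1 - (1 - \<Lambda>)) \<le> \<Lambda> * nh"
    using nTh \<Lambda>_pos by (simp add: divide_le_eq power2_eq_square mult_ac)
  finally have "(1 - \<Lambda>) * nh \<le> nf / (1 - \<Lambda>)"
    by (simp add: algebra_simps)
  then show "(1 - \<Lambda>)\<^sup>2 * L2norm_sq I h \<le> L2norm_sq I f"
    using \<Lambda>_less_1 by (simp add: nh_def nf_def le_divide_eq power2_eq_square mult_ac)
  have minus_Tlin: "L2 I (\<lambda>t. - Tlin h t)" "L2norm_sq I (\<lambda>t. - Tlin h t) = nTh"
    using L2_cmult[OF L2_Tlin(1)[OF h], of "-1"] by (simp_all add: nTh_def L2norm_sq_def)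
  have "AE t in lebesgue_on I. f t = h t + - Tlin h t"
    using fixed by eventually_elim simp
  then have "nf \<le> nh / (1 / (1 + \<Lambda>)) + nTh / (1 - 1 / (1 + \<Lambda>))"
    unfolding nf_def nh_def minus_Tlin(2)[symmetric]
    by (rule L2norm_sq_le_weighted[OF f h minus_Tlin(1)]) (use \<Lambda>_pos in auto)
  also have "\<dots> = (1 + \<Lambda>) * nh + (1 + \<Lambda>) / \<Lambda> * nTh"
    using \<Lambda>_pos by (simp add: field_simps)
  also have "\<dots> \<le> (1 + \<Lambda>) * nh + (1 + \<Lambda>) / \<Lambda> * (\<Lambda>\<^sup>2 * nh)"
    using nTh \<Lambda>_pos by (intro add_left_mono mult_left_mono) auto
  also have "\<dots> = (1 + \<Lambda>)\<^sup>2 * nh"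
    using \<Lambda>_pos by (simp add: field_simps power2_eq_square)
  finally show "L2norm_sq I f \<le> (1 + \<Lambda>)\<^sup>2 * L2norm_sq I h"
    by (simp add: nf_def nh_def)
qed

lemma fixed_point_linear_combination:
  assumes "finite S" and "\<And>m. AE t in lebesgue_on I. h m t = F m t + Tlin (h m) t"
  shows "AE t in lebesgue_on I.
           (\<Sum>m\<in>S. c m * h m t) = (\<Sum>m\<in>S. c m * F m t) + Tlin (\<lambda>t. \<Sum>m\<in>S. c m * h m t) t"
proof -
  have "AE t in lebesgue_on I. \<forall>m\<in>S. h m t = F m t + Tlin (h m) t"
    using assms by (intro AE_finite_allI) auto
  then show ?thesis
    by eventually_elim (simp add: Tlin_sum distrib_left sum.distrib)
qed

lemma riesz_seq_fixed_points:
  assumes F: "riesz_seq I F" and h: "\<And>m. L2 I (h m)"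
    and fixed: "\<And>m. AE t in lebesgue_on I. h m t = F m t + Tlin (h m) t"
  shows "riesz_seq I h"
proof -
  obtain A B where F_L2: "\<And>m. L2 I (F m)" and AB: "0 < A" "0 < B"
    and F_bounds: "\<And>S c. finite S \<Longrightarrow>
           A * (\<Sum>m\<in>S. (c m)\<^sup>2) \<le> L2norm_sq I (\<lambda>t. \<Sum>m\<in>S. c m * F m t) \<and>
           L2norm_sq I (\<lambda>t. \<Sum>m\<in>S. c m * F m t) \<le> B * (\<Sum>m\<in>S. (c m)\<^sup>2)"
    using F unfolding riesz_seq_def by blast
  have "A / (1 + \<Lambda>)\<^sup>2 * (\<Sum>m\<in>S. (c m)\<^sup>2) \<le> L2norm_sq I (\<lambda>t. \<Sum>m\<in>S. c m * h m t) \<and>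
        L2norm_sq I (\<lambda>t. \<Sum>m\<in>S. c m * h m t) \<le> B / (1 - \<Lambda>)\<^sup>2 * (\<Sum>m\<in>S. (c m)\<^sup>2)"
    if S: "finite S" for S c
  proof -
    define H where "H t = (\<Sum>m\<in>S. c m * h m t)" for t
    define P where "P t = (\<Sum>m\<in>S. c m * F m t)" for t
    have "AE t in lebesgue_on I. H t = P t + Tlin H t"
      unfolding H_def[abs_def] P_def[abs_def] using S fixed by (rule fixed_point_linear_combination)
    moreover have "L2 I H" "L2 I P"
      unfolding H_def[abs_def] P_def[abs_def] using S h F_L2 by (simp_all add: L2_sum)
    ultimately have lower: "(1 - \<Lambda>)\<^sup>2 * L2norm_sq I H \<le> L2norm_sq I P"
      and upper: "L2norm_sq I P \<le> (1 + \<Lambda>)\<^sup>2 * L2norm_sq I H"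
      using L2norm_sq_fixed_point_bounds by blast+
    have "A * (\<Sum>m\<in>S. (c m)\<^sup>2) \<le> (1 + \<Lambda>)\<^sup>2 * L2norm_sq I H"
      using F_bounds[OF S, of c] upper by (simp add: P_def[abs_def])
    then have "A / (1 + \<Lambda>)\<^sup>2 * (\<Sum>m\<in>S. (c m)\<^sup>2) \<le> L2norm_sq I H"
      using \<Lambda>_pos by (simp add: pos_divide_le_eq mult.commute)
    moreover have "(1 - \<Lambda>)\<^sup>2 * L2norm_sq I H \<le> B * (\<Sum>m\<in>S. (c m)\<^sup>2)"
      using F_bounds[OF S, of c] lower by (simp add: P_def[abs_def])
    then have "L2norm_sq I H \<le> B / (1 - \<Lambda>)\<^sup>2 * (\<Sum>m\<in>S. (c m)\<^sup>2)"
      using \<Lambda>_less_1 by (simp add: pos_le_divide_eq mult.commute)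
    ultimately show ?thesis
      by (simp add: H_def[abs_def])
  qed
  moreover have "0 < A / (1 + \<Lambda>)\<^sup>2" "0 < B / (1 - \<Lambda>)\<^sup>2"
    using AB \<Lambda>_pos \<Lambda>_less_1 by simp_all
  ultimately show ?thesis
    unfolding riesz_seq_def using h by blast
qed

end

theorem theorem6p14:
  fixes x :: "nat \<Rightarrow> real" and N :: nat and \<alpha> :: "nat \<Rightarrow> real \<Rightarrow> real"
    and F :: "nat \<Rightarrow> real \<Rightarrow> real"
  assumes "N \<ge> 2"
    and "\<And>k. k < N \<Longrightarrow> x k < x (Suc k)"
    and "\<And>n. n \<in> {1..N} \<Longrightarrow> \<alpha> n \<in> borel_measurable (lebesgue_on (Ival x N))"
    and "\<exists>\<Lambda><1. \<forall>n\<in>{1..N}. AE t in lebesgue_on (Ival x N). \<bar>\<alpha> n t\<bar> \<le> \<Lambda>"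
    and "riesz_seq (Ival x N) F"
  shows "riesz_seq (Ival x N) (\<lambda>m. fractal x N \<alpha> (F m) (\<lambda>_. 0))"
proof -
  obtain \<Lambda>\<^sub>0 where "\<Lambda>\<^sub>0 < 1" and \<alpha>_bound: "\<forall>n\<in>{1..N}. AE t in lebesgue_on (Ival x N). \<bar>\<alpha> n t\<bar> \<le> \<Lambda>\<^sub>0"
    using assms(4) by blast
  interpret fractal_operator x N \<alpha> "max \<Lambda>\<^sub>0 (1/2)"
  proof
    show "1 \<le> N"
      using assms(1) by simp
    show "max \<Lambda>\<^sub>0 (1/2) < 1"
      using \<open>\<Lambda>\<^sub>0 < 1\<close> by simp
    show "AE t in lebesgue_on (Ival x N). \<bar>\<alpha> n t\<bar> \<le> max \<Lambda>\<^sub>0 (1/2)" if "n \<in> {1..N}" for n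
      using \<alpha>_bound that by (fastforce elim: eventually_mono)
  qed (simp_all add: assms(2,3))
  have F_L2: "L2 I (F m)" for m
    using assms(5) by (simp add: riesz_seq_def)
  show ?thesis
    by (rule riesz_seq_fixed_points[OF assms(5) fractal_fixed_point[OF F_L2]])
qed

end
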